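(* Let $N$ be the $t$-th power of a positive integer. Assume that for some $C$ and $D$, for every integer $0 \le c < t$, there is a bipartite graph with $C N^{(c+1)/t}$ left nodes, at most $C N^{c/t}$ right nodes, left degree at most $D$, and dynamic matching up to $N^{c/t}$. Then there exists an $N$-connector of depth $t$ with at most $tCD N^{1+1/t}$ edges.
   Context: Dynamic matching up to $K$: in the following game Matcher has a strategy with which she never loses. Requester and Matcher alternate (Requester starts), maintaining a set $M$ of edges, initially empty; Requester removes zero or more edges so that $\#M\le K-1$ and selects a left node $x$; Matcher adds an edge, after which $x$ must be incident to an edge of $M$ and each right node to at most one edge of $M$. An $N$-network is a directed acyclic graph with $N$ designated input nodes and $N$ designated output nodes; its depth is the length of the longest input-to-output path. Connection game: Requester and Connector alternate (Requester starts), maintaining a set of node-disjoint trees, each with an input as root and outputs as leaves, initially empty. Requester removes zero or more trees and may then select an input $x$ and an output $y$ lying on no tree; Connector may create or extend a tree (keeping trees node-disjoint), after which some tree must have root $x$ and leaf $y$. An $N$-connector is an $N$-network in which Connector has a strategy with which she never fails. *)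

theory Defs
  imports Complex_Main
begin

text \<open>A bipartite graph is given by a set L of left nodes, a set R of right nodes and
  an edge set E \<subseteq> L \<times> R (nodes are natural numbers; left and right nodes are
  distinguished by the position in the pair).\<close>

definition bipartite :: "nat set \<Rightarrow> nat set \<Rightarrow> (nat \<times> nat) set \<Rightarrow> bool" where
  "bipartite L R E \<longleftrightarrow> finite L \<and> finite R \<and> E \<subseteq> L \<times> R"

definition left_degree_le :: "nat set \<Rightarrow> (nat \<times> nat) set \<Rightarrow> real \<Rightarrow> bool" where
  "left_degree_le L E D \<longleftrightarrow> (\<forall>x\<in>L. real (card {y. (x, y) \<in> E}) \<le> D)"

text \<open>One round of the matching game: from position M, Requester keeps M' \<subseteq> M with
  #M' \<le> K-1 and selects a left node x; Matcher adds an edge e, and afterwards x must be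
  covered and each right node must be incident to at most one edge.\<close>

definition matcher_ok :: "nat set \<Rightarrow> (nat \<times> nat) set \<Rightarrow> nat \<Rightarrow> (nat \<times> nat) set \<Rightarrow> nat
    \<Rightarrow> (nat \<times> nat) set \<Rightarrow> bool" where
  "matcher_ok L E K M' x M'' \<longleftrightarrow>
     (\<exists>e\<in>E. M'' = insert e M') \<and> x \<in> fst ` M'' \<and> inj_on snd M''"

text \<open>Matcher has a strategy with which she never loses: there is a set of positions
  (a safe region) containing the initial empty position, from which Matcher can answer
  every legal Requester move by a legal move landing again in the safe region.\<close>

definition dynamic_matching :: "nat set \<Rightarrow> nat set \<Rightarrow> (nat \<times> nat) set \<Rightarrow> nat \<Rightarrow> bool" where
  "dynamic_matching L R E K \<longleftrightarrow>
     (\<exists>S. {} \<in> S \<and>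
        (\<forall>M\<in>S. \<forall>M' x. M' \<subseteq> M \<and> card M' \<le> K - 1 \<and> x \<in> L \<longrightarrow>
            (\<exists>M''\<in>S. matcher_ok L E K M' x M'')))"

definition network :: "nat \<Rightarrow> nat set \<Rightarrow> (nat \<times> nat) set \<Rightarrow> nat set \<Rightarrow> nat set \<Rightarrow> bool" where
  "network N V A In Out \<longleftrightarrow> finite V \<and> A \<subseteq> V \<times> V \<and> acyclic A \<and>
     In \<subseteq> V \<and> Out \<subseteq> V \<and> card In = N \<and> card Out = N"

definition depth :: "(nat \<times> nat) set \<Rightarrow> nat set \<Rightarrow> nat set \<Rightarrow> nat" where
  "depth A In Out = Max {k. \<exists>x\<in>In. \<exists>y\<in>Out. (x, y) \<in> A ^^ k}"

text \<open>A tree is a pair (r, T) of a root and a finite set of edges of the network.\<close>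

definition tree_nodes :: "nat \<times> (nat \<times> nat) set \<Rightarrow> nat set" where
  "tree_nodes \<tau> = insert (fst \<tau>) (fst ` snd \<tau> \<union> snd ` snd \<tau>)"

definition tree_leaves :: "nat \<times> (nat \<times> nat) set \<Rightarrow> nat set" where
  "tree_leaves \<tau> = {v \<in> tree_nodes \<tau>. \<not> (\<exists>w. (v, w) \<in> snd \<tau>)}"

definition is_tree :: "(nat \<times> nat) set \<Rightarrow> nat set \<Rightarrow> nat set \<Rightarrow> nat \<times> (nat \<times> nat) set \<Rightarrow> bool" where
  "is_tree A In Out \<tau> \<longleftrightarrow> (let r = fst \<tau>; T = snd \<tau> in
     finite T \<and> T \<subseteq> A \<and> r \<in> In \<and>
     (\<forall>u. (u, r) \<notin> T) \<and>
     (\<forall>v\<in>tree_nodes \<tau> - {r}. \<exists>!u. (u, v) \<in> T) \<and>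
     (\<forall>v\<in>tree_nodes \<tau>. (r, v) \<in> T\<^sup>*) \<and>
     tree_leaves \<tau> \<subseteq> Out)"

definition valid_forest :: "(nat \<times> nat) set \<Rightarrow> nat set \<Rightarrow> nat set
    \<Rightarrow> (nat \<times> (nat \<times> nat) set) set \<Rightarrow> bool" where
  "valid_forest A In Out F \<longleftrightarrow> finite F \<and> (\<forall>\<tau>\<in>F. is_tree A In Out \<tau>) \<and>
     (\<forall>\<tau>\<in>F. \<forall>\<sigma>\<in>F. \<tau> \<noteq> \<sigma> \<longrightarrow> tree_nodes \<tau> \<inter> tree_nodes \<sigma> = {})"

definition connector_ok :: "(nat \<times> nat) set \<Rightarrow> nat set \<Rightarrow> nat set
    \<Rightarrow> (nat \<times> (nat \<times> nat) set) set \<Rightarrow> (nat \<times> nat) option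
    \<Rightarrow> (nat \<times> (nat \<times> nat) set) set \<Rightarrow> bool" where
  "connector_ok A In Out F' req F'' \<longleftrightarrow>
     (F'' = F' \<or> (\<exists>\<tau>. F'' = insert \<tau> F') \<or>
      (\<exists>\<sigma>\<in>F'. \<exists>\<tau>. fst \<tau> = fst \<sigma> \<and> snd \<sigma> \<subseteq> snd \<tau> \<and> F'' = insert \<tau> (F' - {\<sigma>}))) \<and>
     valid_forest A In Out F'' \<and>
     (\<forall>x y. req = Some (x, y) \<longrightarrow> (\<exists>\<tau>\<in>F''. fst \<tau> = x \<and> y \<in> tree_leaves \<tau>))"

definition requester_ok :: "nat set \<Rightarrow> nat set
    \<Rightarrow> (nat \<times> (nat \<times> nat) set) set \<Rightarrow> (nat \<times> (nat \<times> nat) set) set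
    \<Rightarrow> (nat \<times> nat) option \<Rightarrow> bool" where
  "requester_ok In Out F F' req \<longleftrightarrow> F' \<subseteq> F \<and>
     (\<forall>x y. req = Some (x, y) \<longrightarrow> x \<in> In \<and> y \<in> Out \<and> (\<forall>\<tau>\<in>F'. y \<notin> tree_nodes \<tau>))"

definition connector_wins :: "(nat \<times> nat) set \<Rightarrow> nat set \<Rightarrow> nat set \<Rightarrow> bool" where
  "connector_wins A In Out \<longleftrightarrow>
     (\<exists>S. {} \<in> S \<and>
        (\<forall>F\<in>S. \<forall>F' req. requester_ok In Out F F' req \<longrightarrow>
            (\<exists>F''\<in>S. connector_ok A In Out F' req F'')))"

definition connector :: "nat \<Rightarrow> nat set \<Rightarrow> (nat \<times> nat) set \<Rightarrow> nat set \<Rightarrow> nat set \<Rightarrow> bool" where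
  "connector N V A In Out \<longleftrightarrow> network N V A In Out \<and> connector_wins A In Out"

end

theory Submission
  imports Defs "HOL-Library.Nat_Bijection"
begin

(*
  The network has levels t, ..., 0.  Level k consists of n^(t-k) blocks, block g' of level k+1
  is joined to the n blocks g of level k with g div n = g', the inputs form the single block of
  level t and each output is a block of level 0.  For 0 < k < t the nodes of a block of level k+1
  are mapped injectively into the left side of the graph for c = k, whose right side indexes the
  nodes of a block of level k, and each is joined to its neighbours there in every child block;
  level 1 is joined completely to the outputs.  Each of the t layers then has at most
  n^(t-k) * C n^(k+1) * D edges.

  Connector serves a request from x to y by growing the tree of x downwards inside the blocks
  above y.  The tree edges entering a block of level k form a position of the k-th matching game,
  and Connector keeps it inside a position of a winning strategy of Matcher.  It has fewer than
  n^k edges, since each of them leads to a different output of the block and y is still free; so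
  when the current node has no edge into the next block, Matcher's answer to it yields a free node
  there.
*)

lemma card_UN_le_mult:
  assumes "finite I" "\<And>i. i \<in> I \<Longrightarrow> real (card (A i)) \<le> K"
  shows "real (card (\<Union>i\<in>I. A i)) \<le> real (card I) * K"
proof -
  have "real (card (\<Union>i\<in>I. A i)) \<le> (\<Sum>i\<in>I. real (card (A i)))"
    using card_UN_le[OF assms(1), of A] by (simp flip: of_nat_sum)
  also have "\<dots> \<le> real (card I) * K"
    using sum_bounded_above[of I "\<lambda>i. real (card (A i))" K] assms(2) by simp
  finally show ?thesis .
qed

section \<open>Matcher's winning positions\<close>

definition matcher_safe :: "nat set \<Rightarrow> (nat \<times> nat) set \<Rightarrow> nat \<Rightarrow> (nat \<times> nat) set set \<Rightarrow> bool" where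
  "matcher_safe L E K S \<longleftrightarrow> {} \<in> S \<and>
     (\<forall>M\<in>S. \<forall>M' x. M' \<subseteq> M \<and> card M' \<le> K - 1 \<and> x \<in> L \<longrightarrow>
        (\<exists>M''\<in>S. matcher_ok L E K M' x M''))"

lemma dynamic_matching_iff_matcher_safe:
  "dynamic_matching L R E K \<longleftrightarrow> (\<exists>S. matcher_safe L E K S)"
  by (simp add: dynamic_matching_def matcher_safe_def)

lemma matcher_safe_answer:
  assumes "matcher_safe L E K S" "M \<in> S" "M' \<subseteq> M" "card M' \<le> K - 1" "x \<in> L" "x \<notin> fst ` M'"
  obtains r where "(x, r) \<in> E" "r \<notin> snd ` M'" "insert (x, r) M' \<in> S"
proof -
  obtain M'' e where "M'' \<in> S" "e \<in> E" "M'' = insert e M'" "x \<in> fst ` M''" "inj_on snd M''"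
    using assms(1-5) unfolding matcher_safe_def matcher_ok_def by blast
  moreover from this obtain r where "e = (x, r)"
    using assms(6) by (cases e) auto
  moreover have "r \<notin> snd ` M'"
  proof
    assume "r \<in> snd ` M'"
    then obtain a where a: "(a, r) \<in> M'" by force
    with calculation have "(a, r) = (x, r)"
      by (intro inj_onD[of snd M'']) auto
    with a assms(6) show False by force
  qed
  ultimately show thesis using that by blast
qed

lemma dynamic_matching_bounds_ge_1:
  assumes "bipartite L R E" "left_degree_le L E D" "dynamic_matching L R E K" "x \<in> L"
  shows "1 \<le> real (card R)" "1 \<le> D"
proof -
  obtain S where "matcher_safe L E K S"
    using assms(3) by (auto simp: dynamic_matching_iff_matcher_safe)
  moreover from this have "{} \<in> S" by (simp add: matcher_safe_def)
  ultimately obtain r where r: "(x, r) \<in> E"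
    using matcher_safe_answer[of L E K S "{}" "{}" x] assms(4) by auto
  have "finite R" "E \<subseteq> L \<times> R" using assms(1) by (auto simp: bipartite_def)
  then have "finite {r. (x, r) \<in> E}" "r \<in> R"
    using r by (auto intro: finite_subset)
  then have "0 < card R" "0 < card {r. (x, r) \<in> E}"
    using r \<open>finite R\<close> by (auto simp: card_gt_0_iff)
  then show "1 \<le> real (card R)" "1 \<le> D"
    using assms(2,4) by (auto simp: left_degree_le_def)
qed

section \<open>Trees and forests\<close>

lemma is_treeD:
  assumes "is_tree A In Out \<tau>"
  shows "finite (snd \<tau>)" "snd \<tau> \<subseteq> A" "fst \<tau> \<in> In" "tree_leaves \<tau> \<subseteq> Out"
    and "v \<in> tree_nodes \<tau> \<Longrightarrow> (fst \<tau>, v) \<in> (snd \<tau>)\<^sup>*"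
    and "v \<in> tree_nodes \<tau> \<Longrightarrow> v \<noteq> fst \<tau> \<Longrightarrow> \<exists>!p. (p, v) \<in> snd \<tau>"
  using assms by (simp_all add: is_tree_def Let_def)

lemma tree_nodes_edge: "(a, b) \<in> snd \<tau> \<Longrightarrow> a \<in> tree_nodes \<tau> \<and> b \<in> tree_nodes \<tau>"
  by (force simp: tree_nodes_def)

lemma root_in_tree_nodes: "fst \<tau> \<in> tree_nodes \<tau>"
  by (simp add: tree_nodes_def)

lemma is_tree_mono: "is_tree A In Out \<tau> \<Longrightarrow> Out \<subseteq> Out' \<Longrightarrow> is_tree A In Out' \<tau>"
  by (auto simp: is_tree_def Let_def)

lemma is_tree_root: "x \<in> In \<Longrightarrow> is_tree A In (insert x Out) (x, {})"
  by (simp add: is_tree_def tree_nodes_def tree_leaves_def)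

lemma is_tree_parent_unique:
  assumes "is_tree A In Out \<tau>" "(a, v) \<in> snd \<tau>" "(b, v) \<in> snd \<tau>"
  shows "a = b"
proof -
  have "v \<in> tree_nodes \<tau> - {fst \<tau>}"
    using assms tree_nodes_edge[OF assms(2)] by (auto simp: is_tree_def Let_def)
  then have "\<exists>!p. (p, v) \<in> snd \<tau>" using assms(1) by (auto simp: is_tree_def Let_def)
  then show ?thesis using assms(2,3) by blast
qed

lemma is_tree_relpow_ancestor_unique:
  assumes "is_tree A In Out \<tau>"
  shows "(a, v) \<in> snd \<tau> ^^ m \<Longrightarrow> (b, v) \<in> snd \<tau> ^^ m \<Longrightarrow> a = b"
proof (induction m arbitrary: v)
  case (Suc m)
  from Suc.prems obtain w w' where
    "(a, w) \<in> snd \<tau> ^^ m" "(w, v) \<in> snd \<tau>" "(b, w') \<in> snd \<tau> ^^ m" "(w', v) \<in> snd \<tau>"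
    by (meson relpow_Suc_E)
  with is_tree_parent_unique[OF assms] Suc.IH show ?case by metis
qed simp

lemma is_tree_leaf_below:
  assumes "is_tree A In Out \<tau>" "acyclic A" "a \<in> tree_nodes \<tau>"
  shows "\<exists>z\<in>tree_leaves \<tau>. (a, z) \<in> (snd \<tau>)\<^sup>*"
proof -
  have "wf ((snd \<tau>)\<inverse>)"
    using is_treeD(1,2)[OF assms(1)] assms(2)
    by (intro finite_acyclic_wf_converse) (auto intro: acyclic_subset)
  then show ?thesis using assms(3)
  proof (induction a)
    case (less a)
    show ?case
    proof (cases "\<exists>w. (a, w) \<in> snd \<tau>")
      case True
      then obtain w where w: "(a, w) \<in> snd \<tau>" by blast
      with less.IH tree_nodes_edge[OF w] obtain z where "z \<in> tree_leaves \<tau>" "(w, z) \<in> (snd \<tau>)\<^sup>*"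
        by blast
      with w show ?thesis by (meson converse_rtrancl_into_rtrancl)
    next
      case False
      with less.prems show ?thesis by (auto simp: tree_leaves_def)
    qed
  qed
qed

lemma is_tree_follow:
  "is_tree A In (insert u Out) \<tau> \<Longrightarrow> (u, w) \<in> snd \<tau> \<Longrightarrow> is_tree A In (insert w Out) \<tau>"
  by (auto simp: is_tree_def Let_def tree_leaves_def)

lemma is_tree_extend:
  assumes "is_tree A In (insert u Out) \<tau>" "u \<in> tree_nodes \<tau>" "(u, v) \<in> A" "v \<notin> tree_nodes \<tau>"
  shows "is_tree A In (insert v Out) (fst \<tau>, insert (u, v) (snd \<tau>))"
    and "tree_nodes (fst \<tau>, insert (u, v) (snd \<tau>)) = insert v (tree_nodes \<tau>)"
proof -
  obtain x T where \<tau>: "\<tau> = (x, T)" by (cases \<tau>)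
  show nodes: "tree_nodes (fst \<tau>, insert (u, v) (snd \<tau>)) = insert v (tree_nodes \<tau>)"
    using assms(2) by (auto simp: tree_nodes_def \<tau>)
  have no_parent: "(p, v) \<notin> T" for p
    using assms(4) tree_nodes_edge[of p v \<tau>] \<tau> by auto
  have "v \<noteq> x" using assms(4) root_in_tree_nodes[of \<tau>] \<tau> by auto
  have mono: "T\<^sup>* \<subseteq> (insert (u, v) T)\<^sup>*" by (rule rtrancl_mono) auto
  have reach: "(x, w) \<in> (insert (u, v) T)\<^sup>*" if "w \<in> tree_nodes \<tau>" for w
    using assms(1) that mono by (auto simp: is_tree_def \<tau>)
  have "(x, v) \<in> (insert (u, v) T)\<^sup>*"
    using reach[OF assms(2)] by (meson insertI1 rtrancl.rtrancl_into_rtrancl)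
  moreover have "tree_leaves (x, insert (u, v) T) \<subseteq> insert v (tree_leaves \<tau> - {u})"
    using nodes by (auto simp: tree_leaves_def \<tau>)
  ultimately show "is_tree A In (insert v Out) (fst \<tau>, insert (u, v) (snd \<tau>))"
    using assms(1,3) nodes no_parent reach \<open>v \<noteq> x\<close>
    unfolding is_tree_def Let_def \<tau> by (auto 0 3)
qed

lemma is_tree_remove_output: "is_tree A In (insert u Out) \<rho> \<Longrightarrow> u \<notin> tree_nodes \<rho> \<Longrightarrow> is_tree A In Out \<rho>"
  by (auto simp: is_tree_def Let_def tree_leaves_def)

lemma valid_forest_mono: "valid_forest A In Out F \<Longrightarrow> Out \<subseteq> Out' \<Longrightarrow> valid_forest A In Out' F"
  by (auto simp: valid_forest_def intro: is_tree_mono)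

lemma valid_forest_subset: "valid_forest A In Out F \<Longrightarrow> F' \<subseteq> F \<Longrightarrow> valid_forest A In Out F'"
  unfolding valid_forest_def by (blast intro: finite_subset)

lemma valid_forest_is_tree: "valid_forest A In Out F \<Longrightarrow> \<tau> \<in> F \<Longrightarrow> is_tree A In Out \<tau>"
  by (simp add: valid_forest_def)

lemma valid_forest_disjoint:
  "valid_forest A In Out F \<Longrightarrow> \<tau> \<in> F \<Longrightarrow> \<sigma> \<in> F \<Longrightarrow> \<tau> \<noteq> \<sigma> \<Longrightarrow> tree_nodes \<tau> \<inter> tree_nodes \<sigma> = {}"
  by (simp add: valid_forest_def)

lemma valid_forest_node_unique:
  assumes "valid_forest A In Out F" "\<tau> \<in> F" "\<sigma> \<in> F" "v \<in> tree_nodes \<tau>" "v \<in> tree_nodes \<sigma>"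
  shows "\<tau> = \<sigma>"
proof (rule ccontr)
  assume "\<tau> \<noteq> \<sigma>"
  with valid_forest_disjoint[OF assms(1-3)] have "tree_nodes \<tau> \<inter> tree_nodes \<sigma> = {}" .
  with assms(4,5) show False by auto
qed

lemma valid_forest_insert:
  assumes "valid_forest A In Out P" "is_tree A In Out \<tau>"
    and "\<And>\<rho>. \<rho> \<in> P \<Longrightarrow> tree_nodes \<tau> \<inter> tree_nodes \<rho> = {}"
  shows "valid_forest A In Out (insert \<tau> P)"
  using assms unfolding valid_forest_def by (auto simp: Int_commute)

lemma valid_forest_other_trees:
  assumes "valid_forest A In (insert u Out) (insert \<tau> P)" "\<tau> \<notin> P" "u \<in> tree_nodes \<tau>"
  shows "valid_forest A In Out P"
proof -
  have "is_tree A In Out \<rho>" if "\<rho> \<in> P" for \<rho>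
  proof (rule is_tree_remove_output)
    show "is_tree A In (insert u Out) \<rho>" using valid_forest_is_tree[OF assms(1), of \<rho>] that by simp
    have "tree_nodes \<tau> \<inter> tree_nodes \<rho> = {}"
      using valid_forest_disjoint[OF assms(1), of \<tau> \<rho>] assms(2) that by auto
    then show "u \<notin> tree_nodes \<rho>" using assms(3) by auto
  qed
  then show ?thesis
    using valid_forest_subset[OF assms(1) subset_insertI] by (simp add: valid_forest_def)
qed

lemma valid_forest_follow:
  assumes "valid_forest A In (insert u Out) (insert \<tau> P)" "\<tau> \<notin> P" "(u, w) \<in> snd \<tau>"
  shows "valid_forest A In (insert w Out) (insert \<tau> P)"
proof (rule valid_forest_insert)
  have "u \<in> tree_nodes \<tau>" using tree_nodes_edge[OF assms(3)] by simp
  from valid_forest_other_trees[OF assms(1,2) this] show "valid_forest A In (insert w Out) P"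
    by (rule valid_forest_mono) (rule subset_insertI)
  show "is_tree A In (insert w Out) \<tau>"
    using is_tree_follow[OF valid_forest_is_tree[OF assms(1)] assms(3)] by simp
  show "tree_nodes \<tau> \<inter> tree_nodes \<rho> = {}" if "\<rho> \<in> P" for \<rho>
    using valid_forest_disjoint[OF assms(1), of \<tau> \<rho>] assms(2) that by auto
qed

lemma valid_forest_extend:
  assumes "valid_forest A In (insert u Out) (insert \<tau> P)" "\<tau> \<notin> P" "u \<in> tree_nodes \<tau>"
    and "(u, v) \<in> A" "\<forall>\<rho>\<in>insert \<tau> P. v \<notin> tree_nodes \<rho>"
  defines "\<tau>' \<equiv> (fst \<tau>, insert (u, v) (snd \<tau>))"
  shows "valid_forest A In (insert v Out) (insert \<tau>' P)" "\<tau>' \<notin> P"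
proof -
  have disj: "tree_nodes \<tau> \<inter> tree_nodes \<rho> = {}" if "\<rho> \<in> P" for \<rho>
    using valid_forest_disjoint[OF assms(1), of \<tau> \<rho>] assms(2) that by auto
  have "v \<notin> tree_nodes \<tau>" using assms(5) by simp
  from is_tree_extend[OF valid_forest_is_tree[OF assms(1)] assms(3,4) this]
  have \<tau>': "is_tree A In (insert v Out) \<tau>'" "tree_nodes \<tau>' = insert v (tree_nodes \<tau>)"
    unfolding \<tau>'_def by simp_all
  have "fst \<tau>' \<in> tree_nodes \<tau> \<inter> tree_nodes \<tau>'"
    using root_in_tree_nodes[of \<tau>] root_in_tree_nodes[of \<tau>'] by (simp add: \<tau>'_def)
  then show "\<tau>' \<notin> P" using disj[of \<tau>'] by auto
  have "valid_forest A In (insert v Out) P"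
    using valid_forest_other_trees[OF assms(1-3)] by (rule valid_forest_mono) (rule subset_insertI)
  then show "valid_forest A In (insert v Out) (insert \<tau>' P)"
    using \<tau>'(1) disj assms(5) by (intro valid_forest_insert) (auto simp: \<tau>'(2))
qed

section \<open>The layered network\<close>

text \<open>\<open>node k g i\<close> is the \<open>i\<close>-th node of block \<open>g\<close> on level \<open>k\<close>.\<close>

definition node :: "nat \<Rightarrow> nat \<Rightarrow> nat \<Rightarrow> nat" where
  "node k g i = prod_encode (k, prod_encode (g, i))"

definition level :: "nat \<Rightarrow> nat" where
  "level v = fst (prod_decode v)"

definition block :: "nat \<Rightarrow> nat" where
  "block v = fst (prod_decode (snd (prod_decode v)))"

lemma level_node [simp]: "level (node k g i) = k"
  by (simp add: level_def node_def)

lemma block_node [simp]: "block (node k g i) = g"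
  by (simp add: block_def node_def)

lemma node_eq_iff [simp]: "node k g i = node k' g' i' \<longleftrightarrow> k = k' \<and> g = g' \<and> i = i'"
  by (auto simp: node_def dest: inj_onD[OF inj_prod_encode])

text \<open>\<open>I k\<close> indexes the nodes of every block on level \<open>k\<close>, with the inputs indexed by \<open>I t\<close>.
  For \<open>0 < k < t\<close>, \<open>I k\<close> is the right side of the \<open>k\<close>-th graph \<open>(L k, I k, E k)\<close>, and level
  \<open>k + 1\<close> is embedded into its left side.\<close>

locale connector_construction =
  fixes n t :: nat and C D :: real
    and I L :: "nat \<Rightarrow> nat set" and E :: "nat \<Rightarrow> (nat \<times> nat) set"
  assumes n_pos: "0 < n" and t_pos: "0 < t" and D_ge_1: "1 \<le> D"
    and card_I_top: "card (I t) = n ^ t"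
    and card_I: "\<And>k. 0 < k \<Longrightarrow> k \<le> t \<Longrightarrow> real (card (I k)) \<le> C * real n ^ k"
    and bipartite: "\<And>k. 0 < k \<Longrightarrow> k < t \<Longrightarrow> bipartite (L k) (I k) (E k)"
    and card_I_le_L: "\<And>k. 0 < k \<Longrightarrow> k < t \<Longrightarrow> card (I (Suc k)) \<le> card (L k)"
    and left_degree: "\<And>k. 0 < k \<Longrightarrow> k < t \<Longrightarrow> left_degree_le (L k) (E k) D"
    and matching: "\<And>k. 0 < k \<Longrightarrow> k < t \<Longrightarrow> dynamic_matching (L k) (I k) (E k) (n ^ k)"
begin

lemma finite_I: "0 < k \<Longrightarrow> k \<le> t \<Longrightarrow> finite (I k)"
  using card_I_top bipartite[of k] n_pos
  by (cases "k = t") (auto simp: bipartite_def intro: card_ge_0_finite)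

definition embed :: "nat \<Rightarrow> nat \<Rightarrow> nat" where
  "embed k = (SOME f. inj_on f (I (Suc k)) \<and> f ` I (Suc k) \<subseteq> L k)"

lemma embed_inj_into:
  assumes "0 < k" "k < t"
  shows "inj_on (embed k) (I (Suc k))" "embed k ` I (Suc k) \<subseteq> L k"
proof -
  have "finite (I (Suc k))" "finite (L k)"
    using finite_I[of "Suc k"] bipartite[OF assms] assms by (auto simp: bipartite_def)
  from card_le_inj[OF this card_I_le_L[OF assms]]
  have "\<exists>f. inj_on f (I (Suc k)) \<and> f ` I (Suc k) \<subseteq> L k" by blast
  from someI_ex[OF this] show "inj_on (embed k) (I (Suc k))" "embed k ` I (Suc k) \<subseteq> L k"
    unfolding embed_def by blast+
qed

text \<open>Level 1 is joined completely to the outputs below it; the index \<open>0\<close> is the only node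
  of an output block.\<close>

definition child_indices :: "nat \<Rightarrow> nat \<Rightarrow> nat set" where
  "child_indices k i = (if k = 0 then {0} else {r. (embed k i, r) \<in> E k})"

definition layer :: "nat \<Rightarrow> (nat \<times> nat) set" where
  "layer k = (\<Union>g<n ^ (t - k). \<Union>i\<in>I (Suc k).
     (\<lambda>r. (node (Suc k) (g div n) i, node k g r)) ` child_indices k i)"

definition edges :: "(nat \<times> nat) set" where
  "edges = (\<Union>k<t. layer k)"

definition inputs :: "nat set" where
  "inputs = node t 0 ` I t"

definition outputs :: "nat set" where
  "outputs = (\<lambda>g. node 0 g 0) ` {..<n ^ t}"

lemma mem_edges:
  "(a, b) \<in> edges \<longleftrightarrow> (\<exists>k g i r. k < t \<and> g < n ^ (t - k) \<and> i \<in> I (Suc k) \<and> r \<in> child_indices k i \<and>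
     a = node (Suc k) (g div n) i \<and> b = node k g r)"
  by (auto simp: edges_def layer_def)

lemma edges_level_block: "(a, b) \<in> edges \<Longrightarrow> level a = Suc (level b) \<and> block a = block b div n"
  by (auto simp: mem_edges)

lemma inner_edgeD:
  assumes "(a, node k g r) \<in> edges" "0 < k"
  shows "k < t \<and> g < n ^ (t - k) \<and> (\<exists>i\<in>I (Suc k). a = node (Suc k) (g div n) i \<and> (embed k i, r) \<in> E k)"
  using assms by (auto simp: mem_edges child_indices_def)

lemma inner_edgeI:
  "k < t \<Longrightarrow> 0 < k \<Longrightarrow> g < n ^ (t - k) \<Longrightarrow> i \<in> I (Suc k) \<Longrightarrow> (embed k i, r) \<in> E k \<Longrightarrow>
    (node (Suc k) (g div n) i, node k g r) \<in> edges"
  unfolding mem_edges child_indices_def by (intro exI[of _ k] exI[of _ g] exI[of _ i] exI[of _ r]) simp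

lemma output_edgeI: "g < n ^ t \<Longrightarrow> i \<in> I 1 \<Longrightarrow> (node 1 (g div n) i, node 0 g 0) \<in> edges"
  unfolding mem_edges child_indices_def using t_pos
  by (intro exI[of _ 0] exI[of _ g] exI[of _ i] exI[of _ 0]) simp

lemma relpow_edges_level_block:
  "T \<subseteq> edges \<Longrightarrow> (a, b) \<in> T ^^ m \<Longrightarrow> level a = level b + m \<and> block b div n ^ m = block a"
proof (induction m arbitrary: b)
  case (Suc m)
  then obtain z where "(a, z) \<in> T ^^ m" "(z, b) \<in> edges" by (meson relpow_Suc_E subsetD)
  with Suc.IH[of z] Suc.prems(1) edges_level_block[of z b] show ?case
    by (simp add: div_mult2_eq mult.commute)
qed simp

lemma acyclic_edges: "acyclic edges"
  unfolding acyclic_def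
proof
  fix x
  show "(x, x) \<notin> edges\<^sup>+"
    using relpow_edges_level_block[of edges x x] by (auto simp: trancl_power)
qed

lemma level_inputs: "x \<in> inputs \<Longrightarrow> level x = t"
  by (auto simp: inputs_def)

section \<open>Connector's strategy\<close>

definition safe_positions :: "nat \<Rightarrow> (nat \<times> nat) set set" where
  "safe_positions k = (SOME S. matcher_safe (L k) (E k) (n ^ k) S)"

lemma matcher_safe_positions: "0 < k \<Longrightarrow> k < t \<Longrightarrow> matcher_safe (L k) (E k) (n ^ k) (safe_positions k)"
  unfolding safe_positions_def using matching by (simp add: dynamic_matching_iff_matcher_safe someI_ex)

text \<open>The tree edges entering block \<open>g\<close> of level \<open>k\<close>, read as edges of the \<open>k\<close>-th graph:
  a position of the \<open>k\<close>-th matching game.\<close>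

definition matching_of :: "(nat \<times> (nat \<times> nat) set) set \<Rightarrow> nat \<Rightarrow> nat \<Rightarrow> (nat \<times> nat) set" where
  "matching_of F k g =
     {(embed k i, r) | i r. \<exists>\<rho>\<in>F. (node (Suc k) (g div n) i, node k g r) \<in> snd \<rho>}"

definition matchings_safe :: "(nat \<times> (nat \<times> nat) set) set \<Rightarrow> bool" where
  "matchings_safe F \<longleftrightarrow> (\<forall>k g. 0 < k \<longrightarrow> k < t \<longrightarrow> (\<exists>M\<in>safe_positions k. matching_of F k g \<subseteq> M))"

definition safe_forest :: "(nat \<times> (nat \<times> nat) set) set \<Rightarrow> bool" where
  "safe_forest F \<longleftrightarrow> valid_forest edges inputs outputs F \<and> matchings_safe F"

lemma matching_of_mono: "F \<subseteq> F' \<Longrightarrow> matching_of F k g \<subseteq> matching_of F' k g"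
  unfolding matching_of_def by blast

lemma matchings_safe_subset: "matchings_safe F' \<Longrightarrow> F \<subseteq> F' \<Longrightarrow> matchings_safe F"
  unfolding matchings_safe_def by (meson matching_of_mono order_trans)

lemma safe_forest_empty: "safe_forest {}"
  using matcher_safe_positions
  by (auto simp: safe_forest_def valid_forest_def matchings_safe_def matching_of_def matcher_safe_def)

lemma safe_forest_subset: "safe_forest F' \<Longrightarrow> F \<subseteq> F' \<Longrightarrow> safe_forest F"
  unfolding safe_forest_def by (blast intro: valid_forest_subset matchings_safe_subset)

lemma matching_of_insert_edge:
  "matching_of (insert (x, insert (node (Suc k) (g div n) i, node k g r) T) P) k g \<subseteq>
     insert (embed k i, r) (matching_of (insert (x, T) P) k g)"
  unfolding matching_of_def by auto

lemma matching_of_insert_edge_elsewhere: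
  "level b \<noteq> k \<or> block b \<noteq> g \<Longrightarrow>
     matching_of (insert (x, insert (a, b) T) P) k g \<subseteq> matching_of (insert (x, T) P) k g"
  unfolding matching_of_def by auto

lemma is_tree_edges_ancestor_unique:
  assumes "is_tree edges inputs Out \<rho>" "(a, z) \<in> (snd \<rho>)\<^sup>*" "(b, z) \<in> (snd \<rho>)\<^sup>*" "level a = level b"
  shows "a = b"
proof -
  have "snd \<rho> \<subseteq> edges" using is_treeD(2)[OF assms(1)] .
  moreover obtain m m' where m: "(a, z) \<in> snd \<rho> ^^ m" and m': "(b, z) \<in> snd \<rho> ^^ m'"
    using assms(2,3) by (auto simp: rtrancl_power)
  ultimately have "m = m'"
    using relpow_edges_level_block[of "snd \<rho>"] assms(4) by force
  with m m' show ?thesis by (simp add: is_tree_relpow_ancestor_unique[OF assms(1)])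
qed

lemma is_tree_edges_parent:
  assumes "is_tree edges inputs Out \<rho>" "v \<in> tree_nodes \<rho>" "level v < t"
  obtains p where "(p, v) \<in> snd \<rho>"
proof -
  have "v \<noteq> fst \<rho>" using level_inputs[OF is_treeD(3)[OF assms(1)]] assms(3) by auto
  with is_treeD(6)[OF assms(1,2)] have "\<exists>!p. (p, v) \<in> snd \<rho>" .
  then show thesis using that by blast
qed

definition matching_leaf ::
    "(nat \<times> (nat \<times> nat) set) set \<Rightarrow> nat \<Rightarrow> nat \<Rightarrow> nat \<times> nat \<Rightarrow> nat \<Rightarrow> bool" where
  "matching_leaf F k g p z \<longleftrightarrow> (\<exists>\<rho>\<in>F. \<exists>i r. p = (embed k i, r) \<and>
     (node (Suc k) (g div n) i, node k g r) \<in> snd \<rho> \<and> z \<in> tree_leaves \<rho> \<and> (node k g r, z) \<in> (snd \<rho>)\<^sup>*)"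

lemma matching_leaf_exists:
  assumes "valid_forest edges inputs Out F" "p \<in> matching_of F k g"
  shows "\<exists>z. matching_leaf F k g p z"
proof -
  obtain \<rho> i r where \<rho>: "\<rho> \<in> F" "p = (embed k i, r)" "(node (Suc k) (g div n) i, node k g r) \<in> snd \<rho>"
    using assms(2) unfolding matching_of_def by blast
  moreover obtain z where "z \<in> tree_leaves \<rho>" "(node k g r, z) \<in> (snd \<rho>)\<^sup>*"
    using is_tree_leaf_below[OF valid_forest_is_tree[OF assms(1) \<rho>(1)] acyclic_edges]
      tree_nodes_edge[OF \<rho>(3)] by blast
  ultimately show ?thesis unfolding matching_leaf_def by blast
qed

lemma matching_leaf_unique:
  assumes F: "valid_forest edges inputs Out F"
    and "matching_leaf F k g p z" "matching_leaf F k g p' z"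
  shows "p = p'"
proof -
  obtain \<rho> i r where \<rho>: "\<rho> \<in> F" "p = (embed k i, r)" "(node (Suc k) (g div n) i, node k g r) \<in> snd \<rho>"
    "z \<in> tree_leaves \<rho>" "(node k g r, z) \<in> (snd \<rho>)\<^sup>*"
    using assms(2) unfolding matching_leaf_def by blast
  obtain \<rho>' i' r' where \<rho>': "\<rho>' \<in> F" "p' = (embed k i', r')" "(node (Suc k) (g div n) i', node k g r') \<in> snd \<rho>'"
    "z \<in> tree_leaves \<rho>'" "(node k g r', z) \<in> (snd \<rho>')\<^sup>*"
    using assms(3) unfolding matching_leaf_def by blast
  have \<rho>_tree: "is_tree edges inputs Out \<rho>" using valid_forest_is_tree[OF F \<rho>(1)] .
  have "z \<in> tree_nodes \<rho>" "z \<in> tree_nodes \<rho>'"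
    using \<rho>(4) \<rho>'(4) by (simp_all add: tree_leaves_def)
  with valid_forest_node_unique[OF F \<rho>(1) \<rho>'(1)] have "\<rho> = \<rho>'" .
  then have "node k g r = node k g r'"
    using is_tree_edges_ancestor_unique[OF \<rho>_tree \<rho>(5), of "node k g r'"] \<rho>'(5) by simp
  then have "r = r'" by simp
  then have "node (Suc k) (g div n) i = node (Suc k) (g div n) i'"
    using is_tree_parent_unique[OF \<rho>_tree \<rho>(3)] \<rho>'(3) \<open>\<rho> = \<rho>'\<close> by blast
  with \<rho>(2) \<rho>'(2) \<open>r = r'\<close> show "p = p'" by simp
qed

lemma matching_leaf_in_block:
  assumes F: "valid_forest edges inputs (insert u outputs) F"
    and "k < level u" "matching_leaf F k g p z"
  shows "z \<in> (\<lambda>j. node 0 (g * n ^ k + j) 0) ` {..<n ^ k}"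
proof -
  obtain \<rho> r where \<rho>: "\<rho> \<in> F" "z \<in> tree_leaves \<rho>" "(node k g r, z) \<in> (snd \<rho>)\<^sup>*"
    using assms(3) unfolding matching_leaf_def by blast
  have \<rho>_tree: "is_tree edges inputs (insert u outputs) \<rho>" using valid_forest_is_tree[OF F \<rho>(1)] .
  obtain m where "(node k g r, z) \<in> snd \<rho> ^^ m"
    using \<rho>(3) by (auto simp: rtrancl_power)
  with is_treeD(2)[OF \<rho>_tree] have m: "k = level z + m" "block z div n ^ m = g"
    using relpow_edges_level_block[of "snd \<rho>" "node k g r" z m] by simp_all
  have "z \<in> insert u outputs" using is_treeD(4)[OF \<rho>_tree] \<rho>(2) by blast
  with m(1) assms(2) have "z \<in> outputs" by auto
  then obtain g' where g': "z = node 0 g' 0" by (auto simp: outputs_def)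
  with m have "g' = g * n ^ k + g' mod n ^ k"
    using div_mult_mod_eq[of g' "n ^ k"] by simp
  then show ?thesis
    unfolding g' using n_pos by (intro image_eqI[of _ _ "g' mod n ^ k"]) auto
qed

text \<open>Every tree edge entering block \<open>g\<close> of level \<open>k\<close> leads down to its own output of that
  block, and the requested output \<open>node 0 g0 0\<close> is not among them.\<close>

lemma card_matching_of_le:
  assumes F: "valid_forest edges inputs (insert u outputs) F"
    and "k < level u" "g0 < n ^ t"
    and free: "\<forall>\<rho>\<in>F. node 0 g0 0 \<notin> tree_nodes \<rho>"
  shows "card (matching_of F k (g0 div n ^ k)) \<le> n ^ k - 1"
proof -
  define g where "g = g0 div n ^ k"
  define block_outputs where "block_outputs = (\<lambda>j. node 0 (g * n ^ k + j) 0) ` {..<n ^ k}"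
  define leaf_of where "leaf_of p = (SOME z. matching_leaf F k g p z)" for p
  have leaf_of: "matching_leaf F k g p (leaf_of p)" if "p \<in> matching_of F k g" for p
    unfolding leaf_of_def using matching_leaf_exists[OF F that] by (rule someI_ex)
  have "leaf_of p \<in> block_outputs - {node 0 g0 0}" if "p \<in> matching_of F k g" for p
    using matching_leaf_in_block[OF F assms(2) leaf_of[OF that]] free leaf_of[OF that]
    unfolding block_outputs_def matching_leaf_def by (auto simp: tree_leaves_def)
  moreover have "inj_on leaf_of (matching_of F k g)"
    using matching_leaf_unique[OF F] leaf_of by (metis inj_onI)
  ultimately have "card (matching_of F k g) \<le> card (block_outputs - {node 0 g0 0})"
    by (intro card_inj_on_le) (auto simp: block_outputs_def)
  also have "\<dots> = n ^ k - 1"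
  proof -
    have "g0 = g * n ^ k + g0 mod n ^ k" unfolding g_def by (rule div_mult_mod_eq[symmetric])
    then have "node 0 g0 0 \<in> block_outputs"
      unfolding block_outputs_def using n_pos by (intro image_eqI[of _ _ "g0 mod n ^ k"]) auto
    then show ?thesis by (simp add: block_outputs_def card_image inj_on_def)
  qed
  finally show ?thesis by (simp add: g_def)
qed

lemma embed_not_covered:
  assumes F: "valid_forest edges inputs Out F" and "\<tau> \<in> F" "node (Suc k) (g div n) i \<in> tree_nodes \<tau>"
    and "i \<in> I (Suc k)" "0 < k" "k < t"
    and no_edge: "\<forall>r. (node (Suc k) (g div n) i, node k g r) \<notin> snd \<tau>"
  shows "embed k i \<notin> fst ` matching_of F k g"
proof
  assume "embed k i \<in> fst ` matching_of F k g"
  then obtain i' r \<rho> where \<rho>: "embed k i' = embed k i" "\<rho> \<in> F"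
      "(node (Suc k) (g div n) i', node k g r) \<in> snd \<rho>"
    unfolding matching_of_def by force
  have "snd \<rho> \<subseteq> edges" using is_treeD(2)[OF valid_forest_is_tree[OF F \<rho>(2)]] .
  with \<rho>(3) have "(node (Suc k) (g div n) i', node k g r) \<in> edges" by blast
  from inner_edgeD[OF this assms(5)] have "i' \<in> I (Suc k)" by simp
  with \<rho>(1) embed_inj_into(1)[OF assms(5,6)] assms(4) have "i' = i" by (auto dest: inj_onD)
  with \<rho>(3) have "node (Suc k) (g div n) i \<in> tree_nodes \<rho>" using tree_nodes_edge by blast
  from valid_forest_node_unique[OF F \<rho>(2) assms(2) this assms(3)] have "\<rho> = \<tau>" .
  with \<rho>(3) \<open>i' = i\<close> no_edge show False by blast
qed

lemma node_not_in_forest: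
  assumes F: "valid_forest edges inputs Out F" and "\<rho> \<in> F" "0 < k" "k < t"
    and "r \<notin> snd ` matching_of F k g"
  shows "node k g r \<notin> tree_nodes \<rho>"
proof
  assume "node k g r \<in> tree_nodes \<rho>"
  with valid_forest_is_tree[OF F assms(2)] assms(4) obtain p where p: "(p, node k g r) \<in> snd \<rho>"
    by (auto elim: is_tree_edges_parent)
  moreover have "snd \<rho> \<subseteq> edges" using is_treeD(2)[OF valid_forest_is_tree[OF F assms(2)]] .
  ultimately obtain i where "p = node (Suc k) (g div n) i"
    using inner_edgeD assms(3) by blast
  with p assms(2) have "(embed k i, r) \<in> matching_of F k g" unfolding matching_of_def by blast
  with assms(5) show False by force
qed

lemma matchings_safe_extend:
  assumes "matchings_safe (insert \<tau> P)"
    and "insert (embed k i, r) (matching_of (insert \<tau> P) k g) \<in> safe_positions k"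
  shows "matchings_safe (insert (fst \<tau>, insert (node (Suc k) (g div n) i, node k g r) (snd \<tau>)) P)"
  unfolding matchings_safe_def
proof (intro allI impI)
  fix k' g' assume k': "0 < k'" "k' < t"
  let ?F = "insert (fst \<tau>, insert (node (Suc k) (g div n) i, node k g r) (snd \<tau>)) P"
  show "\<exists>M\<in>safe_positions k'. matching_of ?F k' g' \<subseteq> M"
  proof (cases "k' = k \<and> g' = g")
    case True
    then show ?thesis
      using assms(2) matching_of_insert_edge[where x = "fst \<tau>" and T = "snd \<tau>"] by (intro bexI) simp_all
  next
    case False
    then have "matching_of ?F k' g' \<subseteq> matching_of (insert \<tau> P) k' g'"
      using matching_of_insert_edge_elsewhere[where x = "fst \<tau>" and T = "snd \<tau>" and b = "node k g r"
          and k = k' and g = g'] by auto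
    moreover obtain M where "M \<in> safe_positions k'" "matching_of (insert \<tau> P) k' g' \<subseteq> M"
      using assms(1) k' unfolding matchings_safe_def by blast
    ultimately show ?thesis by blast
  qed
qed

lemma matchings_safe_extend_output:
  assumes "matchings_safe (insert \<tau> P)"
  shows "matchings_safe (insert (fst \<tau>, insert (a, node 0 g 0) (snd \<tau>)) P)"
  unfolding matchings_safe_def
proof (intro allI impI)
  fix k g' assume k: "0 < k" "k < t"
  then obtain M where M: "M \<in> safe_positions k" "matching_of (insert \<tau> P) k g' \<subseteq> M"
    using assms unfolding matchings_safe_def by blast
  have "matching_of (insert (fst \<tau>, insert (a, node 0 g 0) (snd \<tau>)) P) k g' \<subseteq> matching_of (insert \<tau> P) k g'"
    using matching_of_insert_edge_elsewhere[of "node 0 g 0" k g' "fst \<tau>" a "snd \<tau>" P] k by simp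
  with M show "\<exists>M\<in>safe_positions k. matching_of (insert (fst \<tau>, insert (a, node 0 g 0) (snd \<tau>)) P) k g' \<subseteq> M"
    by blast
qed

text \<open>The state while a request to the output \<open>node 0 g0 0\<close> is served: the tree \<open>\<tau>\<close> has
  been grown down to the node \<open>u\<close> of level \<open>k\<close> in the block above that output, and \<open>u\<close> is the
  only node of the forest that may be a leaf without being an output.\<close>

definition routing :: "nat \<Rightarrow> nat \<Rightarrow> (nat \<times> (nat \<times> nat) set) set \<Rightarrow> nat \<times> (nat \<times> nat) set \<Rightarrow> nat \<Rightarrow> bool" where
  "routing g0 k P \<tau> u \<longleftrightarrow> g0 < n ^ t \<and>
     valid_forest edges inputs (insert u outputs) (insert \<tau> P) \<and> \<tau> \<notin> P \<and>
     matchings_safe (insert \<tau> P) \<and> (\<forall>\<rho>\<in>insert \<tau> P. node 0 g0 0 \<notin> tree_nodes \<rho>) \<and>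
     u \<in> tree_nodes \<tau> \<and> (\<exists>i\<in>I k. u = node k (g0 div n ^ k) i)"

lemma routing_follow:
  assumes "routing g0 (Suc k) P \<tau> u" "0 < k" and edge: "(u, node k (g0 div n ^ k) r) \<in> snd \<tau>"
  shows "routing g0 k P \<tau> (node k (g0 div n ^ k) r)"
proof -
  have F: "valid_forest edges inputs (insert u outputs) (insert \<tau> P)" "\<tau> \<notin> P"
    using assms(1) by (simp_all add: routing_def)
  have "snd \<tau> \<subseteq> edges" using is_treeD(2)[OF valid_forest_is_tree[OF F(1)]] by simp
  with edge obtain i where "k < t" "(embed k i, r) \<in> E k"
    using inner_edgeD[of u k "g0 div n ^ k" r] assms(2) by blast
  then have "r \<in> I k" using bipartite[OF assms(2)] by (auto simp: bipartite_def)
  moreover have "valid_forest edges inputs (insert (node k (g0 div n ^ k) r) outputs) (insert \<tau> P)"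
    using valid_forest_follow[OF F edge] .
  moreover have "node k (g0 div n ^ k) r \<in> tree_nodes \<tau>" using tree_nodes_edge[OF edge] by simp
  ultimately show ?thesis using assms(1) unfolding routing_def by blast
qed

lemma routing_matcher_answer:
  assumes route: "routing g0 (Suc k) P \<tau> u" and k: "0 < k" "k < t"
    and u: "i \<in> I (Suc k)" "u = node (Suc k) (g0 div n ^ k div n) i"
    and no_edge: "\<forall>r. (u, node k (g0 div n ^ k) r) \<notin> snd \<tau>"
  defines "M' \<equiv> matching_of (insert \<tau> P) k (g0 div n ^ k)"
  obtains r where "(embed k i, r) \<in> E k" "r \<notin> snd ` M'" "insert (embed k i, r) M' \<in> safe_positions k"
proof -
  have F: "valid_forest edges inputs (insert u outputs) (insert \<tau> P)" "u \<in> tree_nodes \<tau>"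
    and safe: "matchings_safe (insert \<tau> P)" and g0: "g0 < n ^ t"
    and free: "\<forall>\<rho>\<in>insert \<tau> P. node 0 g0 0 \<notin> tree_nodes \<rho>"
    using route by (simp_all add: routing_def)
  obtain M where M: "M \<in> safe_positions k" "M' \<subseteq> M"
    using safe k unfolding matchings_safe_def M'_def by blast
  have "card M' \<le> n ^ k - 1"
    unfolding M'_def using card_matching_of_le[OF F(1) _ g0 free] u(2) by simp
  moreover have "embed k i \<in> L k" using embed_inj_into(2)[OF k] u(1) by blast
  moreover have "embed k i \<notin> fst ` M'"
    unfolding M'_def using embed_not_covered[OF F(1) insertI1 _ u(1) k] F(2) u(2) no_edge by simp
  ultimately show thesis
    using matcher_safe_answer[OF matcher_safe_positions[OF k] M] that by blast
qed

lemma routing_grow: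
  assumes route: "routing g0 (Suc k) P \<tau> u" and k: "0 < k" "k < t"
    and no_edge: "\<forall>r. (u, node k (g0 div n ^ k) r) \<notin> snd \<tau>"
  obtains r where "routing g0 k P (fst \<tau>, insert (u, node k (g0 div n ^ k) r) (snd \<tau>)) (node k (g0 div n ^ k) r)"
proof -
  define g where "g = g0 div n ^ k"
  have F: "valid_forest edges inputs (insert u outputs) (insert \<tau> P)" "\<tau> \<notin> P" "u \<in> tree_nodes \<tau>"
    and safe: "matchings_safe (insert \<tau> P)" and g0: "g0 < n ^ t"
    and free: "\<forall>\<rho>\<in>insert \<tau> P. node 0 g0 0 \<notin> tree_nodes \<rho>"
    using route by (simp_all add: routing_def)
  have "g0 div n ^ Suc k = g div n" by (simp only: g_def power_Suc2 div_mult2_eq)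
  then obtain i where i: "i \<in> I (Suc k)" "u = node (Suc k) (g div n) i"
    using route by (auto simp: routing_def)
  obtain r where r: "(embed k i, r) \<in> E k" "r \<notin> snd ` matching_of (insert \<tau> P) k g"
    "insert (embed k i, r) (matching_of (insert \<tau> P) k g) \<in> safe_positions k"
    using routing_matcher_answer[OF route k i(1) _ no_edge] i(2) unfolding g_def by blast
  define v where "v = node k g r"
  have "g < n ^ (t - k)"
    using g0 k by (simp add: g_def less_mult_imp_div_less flip: power_add)
  then have "(u, v) \<in> edges" unfolding i(2) v_def using inner_edgeI k i(1) r(1) by blast
  moreover have "\<forall>\<rho>\<in>insert \<tau> P. v \<notin> tree_nodes \<rho>"
    using node_not_in_forest[OF F(1) _ k] r(2) unfolding v_def by blast
  ultimately have "valid_forest edges inputs (insert v outputs) (insert (fst \<tau>, insert (u, v) (snd \<tau>)) P)"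
    "(fst \<tau>, insert (u, v) (snd \<tau>)) \<notin> P"
    using valid_forest_extend[OF F] by simp_all
  moreover have "matchings_safe (insert (fst \<tau>, insert (u, v) (snd \<tau>)) P)"
    using matchings_safe_extend[OF safe r(3)] unfolding i(2) v_def by simp
  moreover have "r \<in> I k" using r(1) bipartite[OF k] by (auto simp: bipartite_def)
  moreover have "node 0 g0 0 \<notin> tree_nodes (fst \<tau>, insert (u, v) (snd \<tau>))"
    using free k by (auto simp: v_def i(2) tree_nodes_def)
  ultimately show thesis
    using that[of r] free g0 unfolding routing_def v_def g_def by (auto simp: tree_nodes_def)
qed

lemma routing_step:
  assumes "routing g0 (Suc k) P \<tau> u" "0 < k" "k < t"
  obtains \<tau>' u' where "routing g0 k P \<tau>' u'" "fst \<tau>' = fst \<tau>" "snd \<tau> \<subseteq> snd \<tau>'"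
proof (cases "\<exists>r. (u, node k (g0 div n ^ k) r) \<in> snd \<tau>")
  case True
  then obtain r where "(u, node k (g0 div n ^ k) r) \<in> snd \<tau>" by blast
  from routing_follow[OF assms(1,2) this] show thesis using that[of \<tau>] by simp
next
  case False
  then obtain r where
    "routing g0 k P (fst \<tau>, insert (u, node k (g0 div n ^ k) r) (snd \<tau>)) (node k (g0 div n ^ k) r)"
    using routing_grow[OF assms] by blast
  with that show thesis by fastforce
qed

lemma routing_descend:
  "routing g0 k P \<tau> u \<Longrightarrow> 0 < k \<Longrightarrow> k \<le> t \<Longrightarrow>
    \<exists>\<tau>' u'. routing g0 1 P \<tau>' u' \<and> fst \<tau>' = fst \<tau> \<and> snd \<tau> \<subseteq> snd \<tau>'"
proof (induction k arbitrary: \<tau> u)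
  case (Suc k)
  show ?case
  proof (cases "k = 0")
    case True
    with Suc.prems(1) show ?thesis by (intro exI[of _ \<tau>] exI[of _ u]) simp
  next
    case False
    with Suc.prems obtain \<tau>1 u1 where "routing g0 k P \<tau>1 u1" "fst \<tau>1 = fst \<tau>" "snd \<tau> \<subseteq> snd \<tau>1"
      by (auto elim: routing_step)
    with Suc.IH[of \<tau>1 u1] False Suc.prems(3) show ?thesis by fastforce
  qed
qed simp

lemma routing_finish:
  assumes route: "routing g0 1 P \<tau> u"
  obtains \<tau>' where "safe_forest (insert \<tau>' P)" "fst \<tau>' = fst \<tau>" "snd \<tau> \<subseteq> snd \<tau>'"
    "node 0 g0 0 \<in> tree_leaves \<tau>'"
proof -
  define y where "y = node 0 g0 0"
  define \<tau>' where "\<tau>' = (fst \<tau>, insert (u, y) (snd \<tau>))"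
  have F: "valid_forest edges inputs (insert u outputs) (insert \<tau> P)" "\<tau> \<notin> P" "u \<in> tree_nodes \<tau>"
    and safe: "matchings_safe (insert \<tau> P)" and g0: "g0 < n ^ t"
    and free: "\<forall>\<rho>\<in>insert \<tau> P. y \<notin> tree_nodes \<rho>"
    using route by (simp_all add: routing_def y_def)
  obtain i where "i \<in> I 1" "u = node 1 (g0 div n) i" using route by (auto simp: routing_def)
  with g0 output_edgeI have "(u, y) \<in> edges" unfolding y_def by simp
  from valid_forest_extend(1)[OF F this free]
  have "valid_forest edges inputs (insert y outputs) (insert \<tau>' P)" unfolding \<tau>'_def .
  moreover have "insert y outputs = outputs" using g0 by (auto simp: y_def outputs_def)
  moreover have "matchings_safe (insert \<tau>' P)"
    using matchings_safe_extend_output[OF safe] by (simp add: \<tau>'_def y_def)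
  ultimately have "safe_forest (insert \<tau>' P)" by (simp add: safe_forest_def)
  have "(y, w) \<notin> edges" for w
    using edges_level_block[of y w] unfolding y_def by auto
  moreover have "snd \<tau> \<subseteq> edges"
    using is_treeD(2)[OF valid_forest_is_tree[OF F(1)]] by simp
  ultimately have "y \<in> tree_leaves \<tau>'"
    using \<open>(u, y) \<in> edges\<close> by (auto simp: \<tau>'_def tree_leaves_def tree_nodes_def)
  with \<open>safe_forest (insert \<tau>' P)\<close> show thesis
    using that[of \<tau>'] by (auto simp: \<tau>'_def y_def)
qed

lemma routing_complete:
  assumes "routing g0 t P \<tau> x"
  obtains \<tau>' where "safe_forest (insert \<tau>' P)" "fst \<tau>' = fst \<tau>" "snd \<tau> \<subseteq> snd \<tau>'"
    "node 0 g0 0 \<in> tree_leaves \<tau>'"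
proof -
  obtain \<tau>1 u1 where \<tau>1: "routing g0 1 P \<tau>1 u1" "fst \<tau>1 = fst \<tau>" "snd \<tau> \<subseteq> snd \<tau>1"
    using routing_descend[OF assms t_pos] by blast
  obtain \<tau>' where \<tau>': "safe_forest (insert \<tau>' P)" "fst \<tau>' = fst \<tau>1" "snd \<tau>1 \<subseteq> snd \<tau>'"
    "node 0 g0 0 \<in> tree_leaves \<tau>'"
    using routing_finish[OF \<tau>1(1)] .
  from \<tau>1(3) \<tau>'(3) have "snd \<tau> \<subseteq> snd \<tau>'" by (rule order_trans)
  with \<tau>1(2) \<tau>' that show thesis by simp
qed

lemma outputsE:
  assumes "y \<in> outputs"
  obtains g0 where "g0 < n ^ t" "y = node 0 g0 0"
  using assms by (auto simp: outputs_def)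

lemma input_in_top_block:
  assumes "x \<in> inputs" "g0 < n ^ t"
  shows "\<exists>i\<in>I t. x = node t (g0 div n ^ t) i"
  using assms by (auto simp: inputs_def)

lemma routing_start_tree:
  assumes "safe_forest F" "\<sigma> \<in> F" "g0 < n ^ t" "\<forall>\<rho>\<in>F. node 0 g0 0 \<notin> tree_nodes \<rho>"
  shows "routing g0 t (F - {\<sigma>}) \<sigma> (fst \<sigma>)"
proof -
  have F: "valid_forest edges inputs outputs F" "matchings_safe F"
    using assms(1) by (simp_all add: safe_forest_def)
  have "fst \<sigma> \<in> inputs" using is_treeD(3)[OF valid_forest_is_tree[OF F(1) assms(2)]] .
  moreover have "insert \<sigma> (F - {\<sigma>}) = F" using assms(2) by blast
  moreover have "valid_forest edges inputs (insert (fst \<sigma>) outputs) F"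
    using F(1) by (rule valid_forest_mono) (rule subset_insertI)
  ultimately show ?thesis
    using F(2) assms(3,4) input_in_top_block root_in_tree_nodes[of \<sigma>] unfolding routing_def by simp
qed

lemma edges_source_level_le: "(a, b) \<in> edges \<Longrightarrow> level a \<le> t"
  by (auto simp: mem_edges)

lemma input_not_in_other_tree:
  assumes "is_tree edges inputs Out \<rho>" "x \<in> inputs" "fst \<rho> \<noteq> x"
  shows "x \<notin> tree_nodes \<rho>"
proof
  assume "x \<in> tree_nodes \<rho>"
  with is_treeD(6)[OF assms(1)] assms(3) have "\<exists>!p. (p, x) \<in> snd \<rho>" by simp
  then obtain p where "(p, x) \<in> snd \<rho>" by blast
  moreover have "snd \<rho> \<subseteq> edges" using is_treeD(2)[OF assms(1)] .
  ultimately have "(p, x) \<in> edges" by blast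
  with edges_level_block edges_source_level_le level_inputs[OF assms(2)] show False
    by (metis Suc_n_not_le_n)
qed

lemma routing_start_root:
  assumes "safe_forest F" "x \<in> inputs" "\<forall>\<sigma>\<in>F. fst \<sigma> \<noteq> x" "g0 < n ^ t"
    and free: "\<forall>\<rho>\<in>F. node 0 g0 0 \<notin> tree_nodes \<rho>"
  shows "routing g0 t F (x, {}) x"
proof -
  have F: "valid_forest edges inputs outputs F" "matchings_safe F"
    using assms(1) by (simp_all add: safe_forest_def)
  have nodes: "tree_nodes (x, {}) = {x}" by (simp add: tree_nodes_def)
  have "valid_forest edges inputs (insert x outputs) (insert (x, {}) F)"
  proof (rule valid_forest_insert)
    show "valid_forest edges inputs (insert x outputs) F"
      using F(1) by (rule valid_forest_mono) (rule subset_insertI)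
    show "is_tree edges inputs (insert x outputs) (x, {})" using assms(2) by (rule is_tree_root)
    show "tree_nodes (x, {}) \<inter> tree_nodes \<rho> = {}" if "\<rho> \<in> F" for \<rho>
      using input_not_in_other_tree[OF valid_forest_is_tree[OF F(1) that] assms(2)] assms(3) that nodes
      by simp
  qed
  moreover have "matching_of (insert (x, {}) F) = matching_of F"
    by (auto simp: matching_of_def fun_eq_iff)
  moreover have "node 0 g0 0 \<noteq> x" using assms(2) t_pos by (auto simp: inputs_def)
  ultimately show ?thesis
    using assms(3,4) F(2) free nodes input_in_top_block[OF assms(2,4)]
    unfolding routing_def matchings_safe_def by auto
qed

lemma route_request:
  assumes "safe_forest F" "x \<in> inputs" "y \<in> outputs" "\<forall>\<rho>\<in>F. y \<notin> tree_nodes \<rho>"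
  obtains F' where "safe_forest F'" "connector_ok edges inputs outputs F (Some (x, y)) F'"
proof -
  obtain g0 where g0: "g0 < n ^ t" "y = node 0 g0 0" using outputsE[OF assms(3)] .
  show thesis
  proof (cases "\<exists>\<sigma>\<in>F. fst \<sigma> = x")
    case True
    then obtain \<sigma> where \<sigma>: "\<sigma> \<in> F" "fst \<sigma> = x" by blast
    obtain \<tau>' where \<tau>': "safe_forest (insert \<tau>' (F - {\<sigma>}))" "fst \<tau>' = fst \<sigma>" "snd \<sigma> \<subseteq> snd \<tau>'"
      "y \<in> tree_leaves \<tau>'"
      using routing_complete[OF routing_start_tree[OF assms(1) \<sigma>(1) g0(1)]] assms(4) g0(2) by blast
    then have "connector_ok edges inputs outputs F (Some (x, y)) (insert \<tau>' (F - {\<sigma>}))"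
      using \<sigma> unfolding connector_ok_def safe_forest_def by blast
    with \<tau>'(1) show thesis by (rule that)
  next
    case False
    obtain \<tau>' where \<tau>': "safe_forest (insert \<tau>' F)" "fst \<tau>' = x" "y \<in> tree_leaves \<tau>'"
      using routing_complete[OF routing_start_root[OF assms(1,2) _ g0(1)]] False assms(4) g0(2)
      by (metis fst_conv)
    then have "connector_ok edges inputs outputs F (Some (x, y)) (insert \<tau>' F)"
      unfolding connector_ok_def safe_forest_def by blast
    with \<tau>'(1) show thesis by (rule that)
  qed
qed

lemma connector_wins_edges: "connector_wins edges inputs outputs"
  unfolding connector_wins_def
proof (intro exI[of _ "Collect safe_forest"] conjI ballI allI impI)
  show "{} \<in> Collect safe_forest" using safe_forest_empty by simp
next
  fix F F' req assume "F \<in> Collect safe_forest" "requester_ok inputs outputs F F' req"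
  then have safe: "safe_forest F'" and req: "requester_ok inputs outputs F F' req"
    by (auto simp: requester_ok_def intro: safe_forest_subset)
  show "\<exists>F''\<in>Collect safe_forest. connector_ok edges inputs outputs F' req F''"
  proof (cases req)
    case None
    with safe show ?thesis by (auto simp: connector_ok_def safe_forest_def)
  next
    case (Some xy)
    then obtain x y where "req = Some (x, y)" by (cases xy) auto
    with req obtain F'' where "safe_forest F''" "connector_ok edges inputs outputs F' req F''"
      using route_request[OF safe] by (auto simp: requester_ok_def)
    then show ?thesis by blast
  qed
qed

section \<open>Size and depth\<close>

lemma inputs_reach_outputs:
  assumes "x \<in> inputs" "y \<in> outputs"
  shows "(x, y) \<in> edges\<^sup>*"
proof -
  obtain F where "safe_forest F" "connector_ok edges inputs outputs {} (Some (x, y)) F"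
    using route_request[OF safe_forest_empty assms] by blast
  then obtain \<tau> where \<tau>: "is_tree edges inputs outputs \<tau>" "fst \<tau> = x" "y \<in> tree_leaves \<tau>"
    unfolding connector_ok_def safe_forest_def valid_forest_def by blast
  then have "(x, y) \<in> (snd \<tau>)\<^sup>*" using is_treeD(5)[OF \<tau>(1), of y] by (simp add: tree_leaves_def)
  with rtrancl_mono[OF is_treeD(2)[OF \<tau>(1)]] show ?thesis by blast
qed

lemma depth_edges: "depth edges inputs outputs = t"
proof -
  have "{k. \<exists>x\<in>inputs. \<exists>y\<in>outputs. (x, y) \<in> edges ^^ k} = {t}"
  proof
    show "{k. \<exists>x\<in>inputs. \<exists>y\<in>outputs. (x, y) \<in> edges ^^ k} \<subseteq> {t}"
    proof clarify
      fix k x y assume "x \<in> inputs" "y \<in> outputs" "(x, y) \<in> edges ^^ k"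
      moreover have "level y = 0" using \<open>y \<in> outputs\<close> by (auto simp: outputs_def)
      ultimately show "k = t" using relpow_edges_level_block[of edges x y k] level_inputs by simp
    qed
    have "I t \<noteq> {}" using card_I_top n_pos by auto
    then obtain x where x: "x \<in> inputs" by (auto simp: inputs_def)
    moreover have y: "node 0 0 0 \<in> outputs" using n_pos by (simp add: outputs_def)
    ultimately obtain m where m: "(x, node 0 0 0) \<in> edges ^^ m"
      using inputs_reach_outputs by (meson rtrancl_power)
    with relpow_edges_level_block[of edges] level_inputs[OF x] have "m = t" by simp
    with x y m show "{t} \<subseteq> {k. \<exists>x\<in>inputs. \<exists>y\<in>outputs. (x, y) \<in> edges ^^ k}" by blast
  qed
  then show ?thesis by (simp add: depth_def)
qed

lemma finite_card_child_indices:
  assumes "k < t" "i \<in> I (Suc k)"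
  shows "finite (child_indices k i)" "real (card (child_indices k i)) \<le> D"
proof -
  have "finite (child_indices k i) \<and> real (card (child_indices k i)) \<le> D"
  proof (cases "k = 0")
    case True
    then show ?thesis using D_ge_1 by (simp add: child_indices_def)
  next
    case False
    then have k: "0 < k" "k < t" using assms(1) by simp_all
    have "embed k i \<in> L k" using embed_inj_into(2)[OF k] assms(2) by blast
    then have "real (card {r. (embed k i, r) \<in> E k}) \<le> D"
      using left_degree[OF k] by (simp add: left_degree_le_def)
    moreover have "{r. (embed k i, r) \<in> E k} \<subseteq> I k" using bipartite[OF k] by (auto simp: bipartite_def)
    then have "finite {r. (embed k i, r) \<in> E k}" using finite_I[of k] k by (auto intro: finite_subset)
    ultimately show ?thesis using k by (simp add: child_indices_def)
  qed
  then show "finite (child_indices k i)" "real (card (child_indices k i)) \<le> D" by simp_all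
qed

lemma finite_card_layer:
  assumes "k < t"
  shows "finite (layer k)" "real (card (layer k)) \<le> C * D * real n ^ (t + 1)"
proof -
  let ?fan = "\<lambda>g i. (\<lambda>r. (node (Suc k) (g div n) i, node k g r)) ` child_indices k i"
  have fin: "finite (I (Suc k))" using finite_I[of "Suc k"] assms by simp
  have fan: "real (card (?fan g i)) \<le> D" if "i \<in> I (Suc k)" for g i
    using card_image_le[OF finite_card_child_indices(1)[OF assms that]]
      finite_card_child_indices(2)[OF assms that] by (meson of_nat_le_iff order_trans)
  have "real (card (\<Union>i\<in>I (Suc k). ?fan g i)) \<le> C * real n ^ Suc k * D" for g
  proof -
    have "real (card (\<Union>i\<in>I (Suc k). ?fan g i)) \<le> real (card (I (Suc k))) * D"
      using card_UN_le_mult[OF fin fan] .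
    also have "\<dots> \<le> C * real n ^ Suc k * D"
      using card_I[of "Suc k"] assms D_ge_1 by (intro mult_right_mono) auto
    finally show ?thesis .
  qed
  then have "real (card (layer k)) \<le> real (card {..<n ^ (t - k)}) * (C * real n ^ Suc k * D)"
    unfolding layer_def by (intro card_UN_le_mult) auto
  also have "\<dots> = C * D * (real n ^ (t - k) * real n ^ Suc k)" by simp
  also have "real n ^ (t - k) * real n ^ Suc k = real n ^ (t + 1)"
    using assms by (simp flip: power_add)
  finally show "real (card (layer k)) \<le> C * D * real n ^ (t + 1)" .
  show "finite (layer k)"
    unfolding layer_def using fin finite_card_child_indices(1)[OF assms] by auto
qed

lemma finite_card_edges:
  "finite edges" "real (card edges) \<le> real t * C * D * real n ^ (t + 1)"
proof -
  show "finite edges" unfolding edges_def using finite_card_layer(1) by auto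
  have "real (card edges) \<le> real (card {..<t}) * (C * D * real n ^ (t + 1))"
    unfolding edges_def
    by (rule card_UN_le_mult[OF finite_lessThan]) (rule finite_card_layer(2), simp)
  then show "real (card edges) \<le> real t * C * D * real n ^ (t + 1)" by (simp add: mult.assoc)
qed

lemma connector_edges:
  "connector (n ^ t) (inputs \<union> outputs \<union> Field edges) edges inputs outputs"
  unfolding connector_def network_def
proof (intro conjI)
  show "finite (inputs \<union> outputs \<union> Field edges)"
    using finite_card_edges(1) finite_I[of t] t_pos
    by (simp add: inputs_def outputs_def finite_Field)
  show "edges \<subseteq> (inputs \<union> outputs \<union> Field edges) \<times> (inputs \<union> outputs \<union> Field edges)"
    by (auto intro: FieldI1 FieldI2)
  show "card inputs = n ^ t" using card_I_top by (simp add: inputs_def card_image inj_on_def)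
  show "card outputs = n ^ t" by (simp add: outputs_def card_image inj_on_def)
qed (auto simp: acyclic_edges connector_wins_edges)

end

lemma connector_construction_of_graphs:
  assumes "0 < n" "0 < t" "1 \<le> C" "1 \<le> D"
    and graphs: "\<And>c. c < t \<Longrightarrow> bipartite (L c) (R c) (E c) \<and>
      real (card (L c)) = C * real (n ^ (c + 1)) \<and> real (card (R c)) \<le> C * real (n ^ c) \<and>
      left_degree_le (L c) (E c) D \<and> dynamic_matching (L c) (R c) (E c) (n ^ c)"
  shows "connector_construction n t C D (\<lambda>k. if k = t then {..<n ^ t} else R k) L E"
proof
  have top: "real n ^ m \<le> C * real n ^ m" for m
    using mult_right_mono[of 1 C "real n ^ m"] assms(3) by simp
  fix k assume k: "0 < k" "k < t"
  with graphs[of k] show "bipartite (L k) (if k = t then {..<n ^ t} else R k) (E k)"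
    "left_degree_le (L k) (E k) D"
    "dynamic_matching (L k) (if k = t then {..<n ^ t} else R k) (E k) (n ^ k)"
    by simp_all
  have "real (card (if Suc k = t then {..<n ^ t} else R (Suc k))) \<le> C * real n ^ Suc k"
    using graphs[of "Suc k"] top[of "Suc k"] k by (cases "Suc k = t") (simp_all del: power_Suc)
  also have "\<dots> = real (card (L k))" using graphs[of k] k by simp
  finally show "card (if Suc k = t then {..<n ^ t} else R (Suc k)) \<le> card (L k)" by simp
next
  fix k assume "0 < k" "k \<le> t"
  then show "real (card (if k = t then {..<n ^ t} else R k)) \<le> C * real n ^ k"
    using graphs[of k] mult_right_mono[of 1 C "real n ^ k"] assms(3) by auto
qed (use assms in simp_all)

theorem mainTheorem13:
  fixes n t :: nat and C D :: real
  assumes "n > 0" and "t > 0" and "C > 0"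
    and "\<forall>c<t. \<exists>L R E. bipartite L R E \<and>
            real (card L) = C * real (n ^ (c + 1)) \<and>
            real (card R) \<le> C * real (n ^ c) \<and>
            left_degree_le L E D \<and>
            dynamic_matching L R E (n ^ c)"
  shows "\<exists>V A In Out. connector (n ^ t) V A In Out \<and> depth A In Out = t \<and>
           real (card A) \<le> real t * C * D * real (n ^ (t + 1))"
proof -
  \<comment> \<open>The graph for \<open>c = 0\<close> only serves to show \<open>1 \<le> C\<close> and \<open>1 \<le> D\<close>.\<close>
  obtain L R E where graphs: "\<And>c. c < t \<Longrightarrow> bipartite (L c) (R c) (E c) \<and>
      real (card (L c)) = C * real (n ^ (c + 1)) \<and> real (card (R c)) \<le> C * real (n ^ c) \<and>
      left_degree_le (L c) (E c) D \<and> dynamic_matching (L c) (R c) (E c) (n ^ c)"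
    using assms(4) by metis
  have "real (card (L 0)) > 0" using graphs[of 0] assms by simp
  then obtain x where "x \<in> L 0" by (metis card.empty equals0I of_nat_0 less_irrefl)
  then have "1 \<le> real (card (R 0))" "1 \<le> D"
    using dynamic_matching_bounds_ge_1[of "L 0" "R 0" "E 0"] graphs[of 0] assms(2) by auto
  moreover have "real (card (R 0)) \<le> C" using graphs[of 0] assms(2) by simp
  ultimately interpret connector_construction n t C D "\<lambda>k. if k = t then {..<n ^ t} else R k" L E
    using connector_construction_of_graphs[OF assms(1,2) _ _ graphs] by simp
  show ?thesis
    using connector_edges depth_edges finite_card_edges(2) by (auto simp flip: of_nat_power)
qed

end
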